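(* Fix $q\in[0,1]$, $p\in(0,1)\setminus\{1/2\}$, an integer $k\geq1$ and $f:[0,1]\to[0,1]$, and let $\{S_n\}$ be the elephant random walk with $k$ extractions with replacement described in the context. If either (E1) $1/2<p<1/2+1/(2k)$ and $f(1)<p/(2p-1)$, or (E2) $1/2-1/(2k)<p<1/2$ and $f(0)<(1-p)/(1-2p)$, then $S_n/n$ converges almost surely to some $x^*\in(-1,1)$.
   Context: The model: set $X_0=S_0=0$ and let $X_1\in\{\pm1\}$ with $P(X_1=1)=q$. Let $\mathcal{F}_n$ be the $\sigma$-field of all information of the process up to time $n$. For each $n\geq1$, draw $U_{n,1},\dots,U_{n,k}$ i.i.d. uniform on $\{1,\dots,n\}$ (independently of the past), set $C_n^+=\sum_{i=1}^k\chi\{X_{U_{n,i}}=1\}$, and, conditionally on $\mathcal{F}_n$ and the $U_{n,i}$, let $X_{n+1}=1$ with probability $pf(C_n^+/k)+(1-p)\{1-f(C_n^+/k)\}$ and $X_{n+1}=-1$ otherwise. Set $S_n=\sum_{i=1}^n X_i$. The sample size $k$ does not depend on $n$. *)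

theory Defs
  imports "HOL-Probability.Probability"
begin

text \<open>Elephant random walk with k extractions with replacement.
  X n : the steps (X 0 = 0, X n in {-1,1} for n >= 1);
  U n i : the i-th uniform draw (i in {1..k}) made at time n >= 1, in {1..n}.\<close>

text \<open>Everything is discrete-valued, so the
  sigma-field generated by a history is the family of all its preimages.\<close>
definition erw_hist ::
  "nat \<Rightarrow> (nat \<Rightarrow> 'a \<Rightarrow> int) \<Rightarrow> (nat \<Rightarrow> nat \<Rightarrow> 'a \<Rightarrow> nat) \<Rightarrow> nat \<Rightarrow> nat \<Rightarrow> 'a
     \<Rightarrow> (nat \<Rightarrow> int) \<times> (nat \<Rightarrow> nat \<Rightarrow> nat)" where
  "erw_hist k X U nx nu \<omega> =
     ((\<lambda>j. if 1 \<le> j \<and> j \<le> nx then X j \<omega> else 0),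
      (\<lambda>m i. if 1 \<le> m \<and> m \<le> nu \<and> 1 \<le> i \<and> i \<le> k then U m i \<omega> else 0))"

definition erw_events ::
  "'a measure \<Rightarrow> nat \<Rightarrow> (nat \<Rightarrow> 'a \<Rightarrow> int) \<Rightarrow> (nat \<Rightarrow> nat \<Rightarrow> 'a \<Rightarrow> nat) \<Rightarrow> nat \<Rightarrow> nat \<Rightarrow> 'a set set" where
  "erw_events M k X U nx nu = {erw_hist k X U nx nu -` A \<inter> space M | A. True}"

definition erw_Cplus :: "nat \<Rightarrow> (nat \<Rightarrow> 'a \<Rightarrow> int) \<Rightarrow> (nat \<Rightarrow> nat \<Rightarrow> 'a \<Rightarrow> nat) \<Rightarrow> nat \<Rightarrow> 'a \<Rightarrow> nat" where
  "erw_Cplus k X U n \<omega> = card {i \<in> {1..k}. X (U n i \<omega>) \<omega> = 1}"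

definition erw_S :: "(nat \<Rightarrow> 'a \<Rightarrow> int) \<Rightarrow> nat \<Rightarrow> 'a \<Rightarrow> int" where
  "erw_S X n \<omega> = (\<Sum>j\<in>{1..n}. X j \<omega>)"

text \<open>The model.  F_n = erw_events M k X U n (n-1) (steps up to n, draws before n);
  after the draws at time n the information is erw_events M k X U n n.\<close>
definition is_erw_k ::
  "'a measure \<Rightarrow> real \<Rightarrow> real \<Rightarrow> nat \<Rightarrow> (real \<Rightarrow> real)
     \<Rightarrow> (nat \<Rightarrow> 'a \<Rightarrow> int) \<Rightarrow> (nat \<Rightarrow> nat \<Rightarrow> 'a \<Rightarrow> nat) \<Rightarrow> bool" where
  "is_erw_k M q p k f X U \<longleftrightarrow>
     prob_space M \<and>
     (\<forall>n. X n \<in> measurable M (count_space UNIV)) \<and>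
     (\<forall>n i. U n i \<in> measurable M (count_space UNIV)) \<and>
     (\<forall>\<omega>\<in>space M. X 0 \<omega> = 0) \<and>
     (\<forall>n\<ge>1. \<forall>\<omega>\<in>space M. X n \<omega> \<in> {-1, 1}) \<and>
     measure M {\<omega>\<in>space M. X 1 \<omega> = 1} = q \<and>
     \<comment> \<open>U n 1, ..., U n k i.i.d. uniform on {1..n}, independent of F_n\<close>
     (\<forall>n\<ge>1. \<forall>E\<in>erw_events M k X U n (n - 1). \<forall>u. (\<forall>i\<in>{1..k}. u i \<in> {1..n}) \<longrightarrow>
        measure M (E \<inter> {\<omega>\<in>space M. \<forall>i\<in>{1..k}. U n i \<omega> = u i})
          = measure M E / real n ^ k) \<and>
     \<comment> \<open>conditional law of X (n+1) given F_n and the draws at time n\<close>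
     (\<forall>n\<ge>1. \<forall>E\<in>erw_events M k X U n n.
        measure M (E \<inter> {\<omega>\<in>space M. X (Suc n) \<omega> = 1})
          = (LINT \<omega>:E|M. p * f (real (erw_Cplus k X U n \<omega>) / real k)
                        + (1 - p) * (1 - f (real (erw_Cplus k X U n \<omega>) / real k))))"

end

theory Submission
  imports Defs
begin

(* Given the past, each of the k draws with replacement hits a +1 step with probability N/n,
   N being the number of +1 steps among the first n, so the number of hits is Binomial(k, N/n) and
   E[X (n+1) | F_n] = drift (S_n / n), where drift is a Bernstein-type average of the step
   probabilities p f(c/k) + (1 - p) (1 - f(c/k)).  These lie within |2p - 1|/2 of 1/2, which makes
   drift a contraction with constant k |2p - 1| < 1, hence with a fixed point x* in (-1, 1).
   The bounded martingale differences X (n+1) - drift (S_n / n) have partial sums of order o(n)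
   almost surely (fourth moments and Borel-Cantelli), and the contraction then forces S_n / n
   to x*. *)

section \<open>Binomial averages\<close>

(* binomial_average F k c y is the mean of F (c + Y) for Y ~ Binomial(k, y), expanded along the
   first trial. *)
fun binomial_average :: "(nat \<Rightarrow> real) \<Rightarrow> nat \<Rightarrow> nat \<Rightarrow> real \<Rightarrow> real" where
  "binomial_average F 0 c y = F c"
| "binomial_average F (Suc k) c y =
     y * binomial_average F k (Suc c) y + (1 - y) * binomial_average F k c y"

lemma convex_combination_mem_Icc:
  fixes u v y :: real
  assumes "u \<in> {a..b}" "v \<in> {a..b}" "y \<in> {0..1}"
  shows "y * u + (1 - y) * v \<in> {a..b}"
  using assms convex_bound_le[of u b v y "1 - y"] convex_bound_le[of "-u" "-a" "-v" y "1 - y"]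
  by (auto simp: algebra_simps)

lemma binomial_average_mem_Icc:
  assumes "\<And>j. j \<le> k \<Longrightarrow> F (c + j) \<in> {a..b}" and "y \<in> {0..1}"
  shows "binomial_average F k c y \<in> {a..b}"
  using assms(1)
proof (induction k arbitrary: c)
  case 0
  then show ?case by (metis add_0_right binomial_average.simps(1) le_refl)
next
  case (Suc k)
  have "binomial_average F k (Suc c) y \<in> {a..b}"
    by (rule Suc.IH) (metis Suc.prems Suc_le_mono add_Suc_shift)
  moreover have "binomial_average F k c y \<in> {a..b}"
    by (rule Suc.IH) (use Suc.prems le_SucI in blast)
  ultimately show ?case
    using assms(2) unfolding binomial_average.simps by (rule convex_combination_mem_Icc)
qed

lemma binomial_average_lipschitz:
  assumes "\<And>j. j \<le> k \<Longrightarrow> F (c + j) \<in> {a..b}" and "y \<in> {0..1}" "y' \<in> {0..1}"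
  shows "\<bar>binomial_average F k c y - binomial_average F k c y'\<bar> \<le> real k * (b - a) * \<bar>y - y'\<bar>"
  using assms(1)
proof (induction k arbitrary: c)
  case 0
  then show ?case by simp
next
  case (Suc k)
  let ?A = "\<lambda>c y. binomial_average F k c y"
  have hyps_Suc: "\<And>j. j \<le> k \<Longrightarrow> F (Suc c + j) \<in> {a..b}"
    by (metis Suc.prems Suc_le_mono add_Suc_shift)
  have hyps: "\<And>j. j \<le> k \<Longrightarrow> F (c + j) \<in> {a..b}"
    using Suc.prems le_SucI by blast
  define D1 where "D1 = ?A (Suc c) y - ?A (Suc c) y'"
  define D0 where "D0 = ?A c y - ?A c y'"
  define E where "E = ?A (Suc c) y' - ?A c y'"
  have "binomial_average F (Suc k) c y - binomial_average F (Suc k) c y'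
      = y * D1 + (1 - y) * D0 + (y - y') * E"
    unfolding D1_def D0_def E_def by (simp add: algebra_simps)
  also have "\<bar>\<dots>\<bar> \<le> y * \<bar>D1\<bar> + (1 - y) * \<bar>D0\<bar> + \<bar>y - y'\<bar> * \<bar>E\<bar>"
    using assms(2) by (simp add: abs_mult order.trans[OF abs_triangle_ineq] add_mono abs_triangle_ineq)
  also have "\<dots> \<le> y * (real k * (b - a) * \<bar>y - y'\<bar>) + (1 - y) * (real k * (b - a) * \<bar>y - y'\<bar>)
      + \<bar>y - y'\<bar> * (b - a)"
  proof -
    have "\<bar>E\<bar> \<le> b - a"
      using binomial_average_mem_Icc[of k F "Suc c" a b y', OF hyps_Suc assms(3)]
        binomial_average_mem_Icc[of k F c a b y', OF hyps assms(3)]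
      unfolding E_def by auto
    then show ?thesis
      using assms(2) Suc.IH[OF hyps_Suc] Suc.IH[OF hyps] unfolding D1_def D0_def
      by (intro add_mono mult_left_mono) auto
  qed
  also have "\<dots> = real (Suc k) * (b - a) * \<bar>y - y'\<bar>"
    by (simp add: algebra_simps)
  finally show ?case .
qed

lemma card_filter_insert_fun_upd:
  assumes "a \<notin> I" "finite I"
  shows "card {i \<in> insert a I. (g(a := y)) i \<in> W} = (if y \<in> W then 1 else 0) + card {i \<in> I. g i \<in> W}"
proof -
  have eq: "{i \<in> I. (g(a := y)) i \<in> W} = {i \<in> I. g i \<in> W}"
    using assms by auto
  show ?thesis
  proof (cases "y \<in> W")
    case True
    then have "{i \<in> insert a I. (g(a := y)) i \<in> W} = insert a {i \<in> I. g i \<in> W}"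
      using eq by auto
    then show ?thesis
      using True assms by simp
  next
    case False
    then have "{i \<in> insert a I. (g(a := y)) i \<in> W} = {i \<in> I. g i \<in> W}"
      using eq assms by auto
    then show ?thesis
      using False by simp
  qed
qed

lemma sum_PiE_card_eq_binomial_average:
  assumes "finite I" "finite V" "V \<noteq> {}" "W \<subseteq> V"
  shows "(\<Sum>u\<in>PiE I (\<lambda>_. V). F (c + card {i \<in> I. u i \<in> W}))
       = real (card V) ^ card I * binomial_average F (card I) c (card W / card V)"
  using assms(1)
proof (induction I arbitrary: c rule: finite_induct)
  case empty
  then show ?case by simp
next
  case (insert a I)
  let ?n = "real (card V)" and ?m = "real (card W)"
  let ?A = "\<lambda>c. binomial_average F (card I) c (?m / ?n)"
  have "(\<Sum>u\<in>PiE (insert a I) (\<lambda>_. V). F (c + card {i \<in> insert a I. u i \<in> W}))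
      = (\<Sum>(y, g)\<in>V \<times> PiE I (\<lambda>_. V). F (c + card {i \<in> insert a I. (g(a := y)) i \<in> W}))"
    unfolding PiE_insert_eq using inj_combinator[of a I "\<lambda>_. V"] insert.hyps
    by (subst sum.reindex) (auto intro!: sum.cong)
  also have "\<dots> = (\<Sum>y\<in>V. \<Sum>g\<in>PiE I (\<lambda>_. V). F ((c + (if y \<in> W then 1 else 0)) + card {i \<in> I. g i \<in> W}))"
    unfolding sum.cartesian_product[symmetric]
    by (intro sum.cong refl, unfold card_filter_insert_fun_upd[OF insert.hyps(2,1)]) (simp add: add.assoc)
  also have "\<dots> = (\<Sum>y\<in>V. ?n ^ card I * ?A (c + (if y \<in> W then 1 else 0)))"
    using insert.IH by simp
  also have "\<dots> = (\<Sum>y\<in>V - W. ?n ^ card I * ?A c) + (\<Sum>y\<in>W. ?n ^ card I * ?A (Suc c))"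
    unfolding sum.subset_diff[OF assms(4,2)] by (intro arg_cong2[where f = "(+)"] sum.cong) auto
  also have "\<dots> = ?n ^ card I * (?m * ?A (Suc c) + (?n - ?m) * ?A c)"
    using assms finite_subset[OF assms(4,2)]
    by (simp add: card_Diff_subset card_mono algebra_simps)
  also have "\<dots> = ?n ^ card (insert a I) * binomial_average F (card (insert a I)) c (?m / ?n)"
    using insert.hyps assms by (simp add: field_simps)
  finally show ?case .
qed

section \<open>Averages driven by a contraction\<close>

lemma sum_abs_le_split:
  fixes e :: "nat \<Rightarrow> real"
  assumes "N \<le> n" "\<And>j. \<bar>e j\<bar> \<le> B" "\<And>j. j \<ge> N \<Longrightarrow> \<bar>e j\<bar> \<le> r" "r \<ge> 0"
  shows "(\<Sum>j<n. \<bar>e j\<bar>) \<le> real N * B + real n * r"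
proof -
  have "(\<Sum>j<n. \<bar>e j\<bar>) = (\<Sum>j<N. \<bar>e j\<bar>) + (\<Sum>j\<in>{N..<n}. \<bar>e j\<bar>)"
    using assms(1) by (metis atLeast0LessThan sum.atLeastLessThan_concat zero_le)
  also have "\<dots> \<le> real N * B + real (n - N) * r"
    using sum_bounded_above[of "{..<N}" "\<lambda>j. \<bar>e j\<bar>" B] sum_bounded_above[of "{N..<n}" "\<lambda>j. \<bar>e j\<bar>" r]
      assms(2,3) by (intro add_mono) auto
  also have "real (n - N) * r \<le> real n * r"
    using assms(4) by (intro mult_right_mono) auto
  finally show ?thesis
    by simp
qed

lemma eventually_contracting_averages_step:
  fixes e d T :: "nat \<Rightarrow> real"
  assumes L: "0 \<le> L" "L < 1"
    and contr: "\<And>j. \<bar>d j\<bar> \<le> L * \<bar>e j\<bar>"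
    and avg: "\<And>n. real n * e n = (\<Sum>j<n. d j) + T n"
    and bounded: "\<And>n. \<bar>e n\<bar> \<le> B"
    and T: "(\<lambda>n. T n / real n) \<longlonglongrightarrow> 0"
    and r: "r > 0" and ev: "eventually (\<lambda>n. \<bar>e n\<bar> \<le> r) sequentially"
  shows "eventually (\<lambda>n. \<bar>e n\<bar> \<le> (1 + L) / 2 * r) sequentially"
proof -
  obtain N where N: "\<And>n. n \<ge> N \<Longrightarrow> \<bar>e n\<bar> \<le> r"
    using ev unfolding eventually_sequentially by blast
  have "(\<lambda>n. (L * real N * B + \<bar>T n\<bar>) / real n) \<longlonglongrightarrow> 0"
  proof -
    have "(\<lambda>n. L * real N * B / real n) \<longlonglongrightarrow> 0"
      by (rule lim_const_over_n)
    moreover have "(\<lambda>n. \<bar>T n\<bar> / real n) \<longlonglongrightarrow> 0"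
      using tendsto_rabs_zero[OF T] by simp
    ultimately show ?thesis
      using tendsto_add_zero by (simp add: add_divide_distrib)
  qed
  moreover have "(1 - L) * r / 2 > 0"
    using L r by simp
  ultimately have small: "eventually (\<lambda>n. (L * real N * B + \<bar>T n\<bar>) / real n < (1 - L) * r / 2) sequentially"
    by (rule order_tendstoD)
  show ?thesis
    using small eventually_ge_at_top[of "max N 1"]
  proof eventually_elim
    case (elim n)
    then have n: "n \<ge> N" "real n > 0"
      by auto
    have sum_le: "(\<Sum>j<n. \<bar>e j\<bar>) \<le> real N * B + real n * r"
      using sum_abs_le_split[OF n(1), of e B r] bounded N r by simp
    have "real n * \<bar>e n\<bar> = \<bar>real n * e n\<bar>"
      by (simp add: abs_mult)
    also have "\<dots> = \<bar>(\<Sum>j<n. d j) + T n\<bar>"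
      by (simp only: avg)
    also have "\<dots> \<le> \<bar>\<Sum>j<n. d j\<bar> + \<bar>T n\<bar>"
      by (rule abs_triangle_ineq)
    also have "\<dots> \<le> (\<Sum>j<n. \<bar>d j\<bar>) + \<bar>T n\<bar>"
      by simp
    also have "\<dots> \<le> L * (\<Sum>j<n. \<bar>e j\<bar>) + \<bar>T n\<bar>"
      using contr by (simp add: sum_distrib_left sum_mono)
    also have "\<dots> \<le> L * (real N * B + real n * r) + \<bar>T n\<bar>"
      using sum_le L by (simp add: mult_left_mono)
    finally have "\<bar>e n\<bar> \<le> L * r + (L * real N * B + \<bar>T n\<bar>) / real n"
      using n(2) by (simp add: field_simps)
    moreover have "(1 + L) / 2 * r = L * r + (1 - L) * r / 2"
      by (simp add: field_simps)
    ultimately show ?case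
      using elim(1) by linarith
  qed
qed

lemma tendsto_zero_of_contracting_averages:
  fixes e d T :: "nat \<Rightarrow> real"
  assumes L: "0 \<le> L" "L < 1"
    and contr: "\<And>j. \<bar>d j\<bar> \<le> L * \<bar>e j\<bar>"
    and avg: "\<And>n. real n * e n = (\<Sum>j<n. d j) + T n"
    and bounded: "\<And>n. \<bar>e n\<bar> \<le> B"
    and T: "(\<lambda>n. T n / real n) \<longlonglongrightarrow> 0"
  shows "e \<longlonglongrightarrow> 0"
proof -
  define r where "r = (1 + L) / 2"
  have r: "0 < r" "r < 1"
    using L unfolding r_def by auto
  have B: "B \<ge> 0"
    using bounded[of 0] by simp
  have geometric: "eventually (\<lambda>n. \<bar>e n\<bar> \<le> (B + 1) * r ^ i) sequentially" for i
  proof (induction i)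
    case 0
    then show ?case
      by (intro always_eventually allI order.trans[OF bounded]) simp
  next
    case (Suc i)
    have "(B + 1) * r ^ i > 0"
      using B r by simp
    from eventually_contracting_averages_step[OF L contr avg bounded T this Suc.IH]
    show ?case
      by (simp add: r_def[symmetric] mult_ac)
  qed
  show ?thesis
  proof (rule tendstoI)
    fix \<epsilon> :: real
    assume "\<epsilon> > 0"
    then obtain i where "r ^ i < \<epsilon> / (B + 1)"
      using real_arch_pow_inv[of "\<epsilon> / (B + 1)" r] r B by auto
    then have "(B + 1) * r ^ i < \<epsilon>"
      using B by (simp add: field_simps)
    with geometric[of i] show "eventually (\<lambda>n. dist (e n) 0 < \<epsilon>) sequentially"
      by (auto elim: eventually_mono)
  qed
qed

section \<open>A strong law for bounded orthogonal increments\<close>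

lemma fourth_power_sum_le:
  fixes t e B :: real
  assumes "\<bar>e\<bar> \<le> B"
  shows "(t + e) ^ 4 \<le> t ^ 4 + 4 * t ^ 3 * e + 8 * B\<^sup>2 * t\<^sup>2 + 3 * B ^ 4"
proof -
  have B: "0 \<le> B"
    using assms by simp
  have e2: "e\<^sup>2 \<le> B\<^sup>2"
    using assms by (metis abs_le_square_iff abs_of_nonneg B)
  have "6 * t\<^sup>2 * e\<^sup>2 \<le> 6 * B\<^sup>2 * t\<^sup>2"
    using mult_right_mono[OF e2 zero_le_power2[of t]] by (simp add: mult_ac)
  moreover have "4 * t * e ^ 3 \<le> 2 * B\<^sup>2 * t\<^sup>2 + 2 * B ^ 4"
  proof -
    have "4 * t * e ^ 3 \<le> \<bar>4 * t * e ^ 3\<bar>"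
      by (rule abs_ge_self)
    also have "\<dots> = 4 * \<bar>t\<bar> * \<bar>e\<bar> ^ 3"
      by (simp add: abs_mult power_abs)
    also have "\<dots> \<le> 4 * \<bar>t\<bar> * B ^ 3"
      using assms by (intro mult_left_mono power_mono) auto
    also have "\<dots> \<le> 2 * B\<^sup>2 * t\<^sup>2 + 2 * B ^ 4"
      using sum_squares_bound[of "B * \<bar>t\<bar>" "B\<^sup>2"]
      by (simp add: power_mult_distrib power3_eq_cube power2_eq_square power4_eq_xxxx mult_ac)
    finally show ?thesis .
  qed
  moreover have "e ^ 4 \<le> B ^ 4"
    using e2 by (metis power_mono power_even_eq zero_le_power2 numeral_Bit0 mult_2_right)
  moreover have "(t + e) ^ 4 = t ^ 4 + 4 * t ^ 3 * e + 6 * t\<^sup>2 * e\<^sup>2 + 4 * t * e ^ 3 + e ^ 4"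
    by algebra
  ultimately show ?thesis
    by linarith
qed

context prob_space
begin

lemma AE_eventually_abs_less_of_fourth_moment_bound:
  fixes T :: "nat \<Rightarrow> 'a \<Rightarrow> real"
  assumes [measurable]: "\<And>n. T n \<in> borel_measurable M"
    and integrable: "\<And>n. integrable M (\<lambda>\<omega>. T n \<omega> ^ 4)"
    and moment: "\<And>n. (\<integral>\<omega>. T n \<omega> ^ 4 \<partial>M) \<le> C * real n ^ 2"
    and \<epsilon>: "\<epsilon> > 0"
  shows "AE \<omega> in M. eventually (\<lambda>n. \<bar>T n \<omega>\<bar> < \<epsilon> * real n) sequentially"
proof -
  define A where "A n = {\<omega> \<in> space M. (\<epsilon> * real n) ^ 4 \<le> T n \<omega> ^ 4}" for n
  have [measurable]: "A n \<in> sets M" for n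
    unfolding A_def by measurable
  have bound: "norm (measure M (A n)) \<le> C / \<epsilon> ^ 4 * inverse (real n ^ 2)" if "n \<ge> 1" for n
  proof -
    have pos: "(\<epsilon> * real n) ^ 4 > 0"
      using \<epsilon> that by simp
    have "norm (measure M (A n)) = measure M (A n)"
      by simp
    also have "\<dots> \<le> (\<integral>\<omega>. T n \<omega> ^ 4 \<partial>M) / (\<epsilon> * real n) ^ 4"
      unfolding A_def by (rule integral_Markov_inequality_measure[OF integrable sets.top _ pos]) simp
    also have "\<dots> \<le> C * real n ^ 2 / (\<epsilon> * real n) ^ 4"
      using moment pos by (intro divide_right_mono) auto
    also have "\<dots> = C / \<epsilon> ^ 4 * inverse (real n ^ 2)"
      using that \<epsilon> by (simp add: field_simps)
    finally show ?thesis .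
  qed
  have "summable (\<lambda>n. C / \<epsilon> ^ 4 * inverse (real n ^ 2))"
    by (intro summable_mult inverse_power_summable) simp
  then have "summable (\<lambda>n. measure M (A n))"
    by (rule summable_comparison_test'[where N = 1]) (rule bound)
  then have "AE \<omega> in M. eventually (\<lambda>n. \<omega> \<in> space M - A n) sequentially"
    by (intro borel_cantelli_AE1) (auto simp: emeasure_eq_measure)
  then show ?thesis
  proof (rule AE_mp, intro AE_I2 impI)
    fix \<omega>
    assume "eventually (\<lambda>n. \<omega> \<in> space M - A n) sequentially"
    then show "eventually (\<lambda>n. \<bar>T n \<omega>\<bar> < \<epsilon> * real n) sequentially"
    proof eventually_elim
      case (elim n)
      then have "\<bar>T n \<omega>\<bar> ^ 4 < (\<epsilon> * real n) ^ 4"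
        by (simp add: A_def not_le power_even_abs)
      then show ?case
        by (rule power_less_imp_less_base) (use \<epsilon> in simp)
    qed
  qed
qed

lemma AE_div_tendsto_zero_of_fourth_moment_bound:
  fixes T :: "nat \<Rightarrow> 'a \<Rightarrow> real"
  assumes "\<And>n. T n \<in> borel_measurable M"
    and "\<And>n. integrable M (\<lambda>\<omega>. T n \<omega> ^ 4)"
    and "\<And>n. (\<integral>\<omega>. T n \<omega> ^ 4 \<partial>M) \<le> C * real n ^ 2"
  shows "AE \<omega> in M. (\<lambda>n. T n \<omega> / real n) \<longlonglongrightarrow> 0"
proof -
  have "AE \<omega> in M. \<forall>m. eventually (\<lambda>n. \<bar>T n \<omega>\<bar> < inverse (Suc m) * real n) sequentially"
    unfolding AE_all_countable
    by (intro allI AE_eventually_abs_less_of_fourth_moment_bound[OF assms]) simp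
  then show ?thesis
  proof (rule AE_mp, intro AE_I2 impI tendstoI)
    fix \<omega> and r :: real
    assume all: "\<forall>m. eventually (\<lambda>n. \<bar>T n \<omega>\<bar> < inverse (Suc m) * real n) sequentially"
      and r: "r > 0"
    then obtain m where m: "inverse (Suc m) < r"
      using reals_Archimedean by blast
    show "eventually (\<lambda>n. dist (T n \<omega> / real n) 0 < r) sequentially"
      using all[rule_format, of m] eventually_gt_at_top[of 0]
    proof eventually_elim
      case (elim n)
      have "inverse (Suc m) * real n < r * real n"
        using m elim(2) by (simp add: mult_strict_right_mono)
      then have "\<bar>T n \<omega>\<bar> < r * real n"
        using elim(1) by linarith
      then show ?case
        using elim(2) by (simp add: pos_divide_less_eq)
    qed
  qed
qed

context
  fixes D :: "nat \<Rightarrow> 'a \<Rightarrow> real" and B :: real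
  assumes increment_measurable [measurable]: "\<And>j. D j \<in> borel_measurable M"
    and increment_bounded: "\<And>j \<omega>. \<omega> \<in> space M \<Longrightarrow> \<bar>D j \<omega>\<bar> \<le> B"
    and increment_orthogonal:
      "\<And>n m. m \<in> {1, 3} \<Longrightarrow> (\<integral>\<omega>. (\<Sum>j<n. D j \<omega>) ^ m * D n \<omega> \<partial>M) = 0"
begin

lemma integrable_partial_sum_power_times_increment_power:
  "integrable M (\<lambda>\<omega>. (\<Sum>j<n. D j \<omega>) ^ a * D n \<omega> ^ b)"
proof (rule integrable_const_bound[where B = "(real n * B) ^ a * B ^ b"])
  show "AE \<omega> in M. norm ((\<Sum>j<n. D j \<omega>) ^ a * D n \<omega> ^ b) \<le> (real n * B) ^ a * B ^ b"
  proof (rule AE_I2)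
    fix \<omega>
    assume \<omega>: "\<omega> \<in> space M"
    have "\<bar>\<Sum>j<n. D j \<omega>\<bar> \<le> (\<Sum>j<n. \<bar>D j \<omega>\<bar>)"
      by (rule sum_abs)
    also have "\<dots> \<le> real n * B"
      using sum_bounded_above[of "{..<n}" "\<lambda>j. \<bar>D j \<omega>\<bar>" B] increment_bounded[OF \<omega>] by simp
    finally have "\<bar>\<Sum>j<n. D j \<omega>\<bar> \<le> real n * B" .
    then show "norm ((\<Sum>j<n. D j \<omega>) ^ a * D n \<omega> ^ b) \<le> (real n * B) ^ a * B ^ b"
      using increment_bounded[OF \<omega>, of n]
      by (auto simp: abs_mult power_abs intro!: mult_mono power_mono)
  qed
qed measurable

lemma second_moment_partial_sum_le: "(\<integral>\<omega>. (\<Sum>j<n. D j \<omega>)\<^sup>2 \<partial>M) \<le> B\<^sup>2 * real n"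
proof (induction n)
  case 0
  then show ?case by simp
next
  case (Suc n)
  let ?S = "\<lambda>\<omega>. \<Sum>j<n. D j \<omega>"
  note integrable = integrable_partial_sum_power_times_increment_power
  have "(\<integral>\<omega>. (\<Sum>j<Suc n. D j \<omega>)\<^sup>2 \<partial>M) \<le> (\<integral>\<omega>. ?S \<omega> ^ 2 * D n \<omega> ^ 0 + 2 * (?S \<omega> ^ 1 * D n \<omega>) + B\<^sup>2 \<partial>M)"
  proof (rule integral_mono)
    fix \<omega>
    assume "\<omega> \<in> space M"
    then have "(D n \<omega>)\<^sup>2 \<le> B\<^sup>2"
      using increment_bounded by (metis abs_le_square_iff abs_of_nonneg abs_ge_zero order.trans)
    then show "(\<Sum>j<Suc n. D j \<omega>)\<^sup>2 \<le> ?S \<omega> ^ 2 * D n \<omega> ^ 0 + 2 * (?S \<omega> ^ 1 * D n \<omega>) + B\<^sup>2"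
      by (simp add: power2_sum)
  qed (use integrable[of "Suc n" 2 0] integrable[of n 2 0] integrable[of n 1 1] in auto)
  also have "\<dots> = (\<integral>\<omega>. ?S \<omega> ^ 2 \<partial>M) + 2 * (\<integral>\<omega>. ?S \<omega> ^ 1 * D n \<omega> \<partial>M) + B\<^sup>2"
    using integrable[of n 2 0] integrable[of n 1 1] by (simp add: prob_space)
  also have "\<dots> \<le> B\<^sup>2 * real (Suc n)"
    using Suc.IH increment_orthogonal[of 1 n] by (simp add: algebra_simps)
  finally show ?case .
qed

lemma fourth_moment_partial_sum_le: "(\<integral>\<omega>. (\<Sum>j<n. D j \<omega>) ^ 4 \<partial>M) \<le> 7 * B ^ 4 * real n ^ 2"
proof (induction n)
  case 0
  then show ?case by simp
next
  case (Suc n)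
  let ?S = "\<lambda>\<omega>. \<Sum>j<n. D j \<omega>"
  note integrable = integrable_partial_sum_power_times_increment_power
  have "(\<integral>\<omega>. (\<Sum>j<Suc n. D j \<omega>) ^ 4 \<partial>M)
      \<le> (\<integral>\<omega>. ?S \<omega> ^ 4 * D n \<omega> ^ 0 + 4 * (?S \<omega> ^ 3 * D n \<omega> ^ 1)
            + 8 * B\<^sup>2 * (?S \<omega> ^ 2 * D n \<omega> ^ 0) + 3 * B ^ 4 \<partial>M)"
  proof (rule integral_mono)
    fix \<omega>
    assume \<omega>: "\<omega> \<in> space M"
    show "(\<Sum>j<Suc n. D j \<omega>) ^ 4 \<le> ?S \<omega> ^ 4 * D n \<omega> ^ 0 + 4 * (?S \<omega> ^ 3 * D n \<omega> ^ 1)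
            + 8 * B\<^sup>2 * (?S \<omega> ^ 2 * D n \<omega> ^ 0) + 3 * B ^ 4"
      using fourth_power_sum_le[of "D n \<omega>" B "?S \<omega>"] increment_bounded[OF \<omega>] by (simp add: mult_ac)
  qed (use integrable[of "Suc n" 4 0] integrable[of n 4 0] integrable[of n 3 1] integrable[of n 2 0] in auto)
  also have "\<dots> = (\<integral>\<omega>. ?S \<omega> ^ 4 \<partial>M) + 4 * (\<integral>\<omega>. ?S \<omega> ^ 3 * D n \<omega> \<partial>M)
      + 8 * B\<^sup>2 * (\<integral>\<omega>. ?S \<omega> ^ 2 \<partial>M) + 3 * B ^ 4"
    using integrable[of n 4 0] integrable[of n 3 1] integrable[of n 2 0] by (simp add: prob_space)
  also have "\<dots> \<le> 7 * B ^ 4 * real n ^ 2 + 8 * B ^ 4 * real n + 3 * B ^ 4"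
  proof -
    have "8 * B\<^sup>2 * (\<integral>\<omega>. ?S \<omega> ^ 2 \<partial>M) \<le> 8 * B\<^sup>2 * (B\<^sup>2 * real n)"
      by (intro mult_left_mono second_moment_partial_sum_le) simp
    then have "8 * B\<^sup>2 * (\<integral>\<omega>. ?S \<omega> ^ 2 \<partial>M) \<le> 8 * B ^ 4 * real n"
      by (simp add: power4_eq_xxxx power2_eq_square mult_ac)
    then show ?thesis
      using Suc.IH increment_orthogonal[of 3 n] by simp
  qed
  also have "\<dots> = 7 * B ^ 4 * real (Suc n) ^ 2 - B ^ 4 * (6 * real n + 4)"
    by (simp add: power2_eq_square algebra_simps)
  also have "\<dots> \<le> 7 * B ^ 4 * real (Suc n) ^ 2"
    by simp
  finally show ?case .
qed

lemma AE_partial_sums_div_tendsto_zero: "AE \<omega> in M. (\<lambda>n. (\<Sum>j<n. D j \<omega>) / real n) \<longlonglongrightarrow> 0"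
  using integrable_partial_sum_power_times_increment_power[of _ 4 0] fourth_moment_partial_sum_le
  by (intro AE_div_tendsto_zero_of_fourth_moment_bound) auto

end

end

section \<open>The elephant random walk\<close>

lemma sum_PiE_if_eq_restrict:
  assumes "finite I" "\<And>i. i \<in> I \<Longrightarrow> finite (S i)" "\<And>i. i \<in> I \<Longrightarrow> y i \<in> S i"
  shows "(\<Sum>u\<in>PiE I S. if \<forall>i\<in>I. y i = u i then g u else 0) = g (restrict y I)"
proof -
  have "(\<Sum>u\<in>PiE I S. if \<forall>i\<in>I. y i = u i then g u else 0)
      = (\<Sum>u\<in>PiE I S. if u = restrict y I then g u else 0)"
    by (intro sum.cong refl) (auto simp: PiE_def extensional_def restrict_def)
  also have "\<dots> = g (restrict y I)"
    using assms by (simp add: finite_PiE)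
  finally show ?thesis .
qed

lemma sum_sign_eq_card:
  assumes "finite A" "\<And>j. j \<in> A \<Longrightarrow> x j \<in> {-1, 1}"
  shows "real_of_int (\<Sum>j\<in>A. x j) = 2 * real (card {j \<in> A. x j = 1}) - real (card A)"
proof -
  have "real_of_int (x j) = 2 * (if x j = 1 then 1 else 0) - 1" if "j \<in> A" for j
    using assms(2)[OF that] by auto
  then have "real_of_int (\<Sum>j\<in>A. x j) = (\<Sum>j\<in>A. 2 * (if x j = 1 then 1 else 0) - 1)"
    by simp
  also have "\<dots> = 2 * (\<Sum>j\<in>A. if x j = 1 then 1 else 0) - real (card A)"
    by (simp add: sum_subtractf sum_distrib_left)
  also have "(\<Sum>j\<in>A. if x j = 1 then 1 else 0) = real (card {j \<in> A. x j = 1})"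
    using assms(1) by (simp flip: sum.inter_filter)
  finally show ?thesis .
qed

locale erw =
  fixes M :: "'a measure" and q p :: real and k :: nat and f :: "real \<Rightarrow> real"
    and X :: "nat \<Rightarrow> 'a \<Rightarrow> int" and U :: "nat \<Rightarrow> nat \<Rightarrow> 'a \<Rightarrow> nat"
  assumes model: "is_erw_k M q p k f X U"
    and f_range: "\<forall>x\<in>{0..1}. f x \<in> {0..1}"
begin

sublocale prob_space M
  using model unfolding is_erw_k_def by auto

lemma X_measurable [measurable]: "X n \<in> measurable M (count_space UNIV)"
  using model unfolding is_erw_k_def by auto

lemma U_measurable [measurable]: "U n i \<in> measurable M (count_space UNIV)"
  using model unfolding is_erw_k_def by auto

lemma X_pm1: "n \<ge> 1 \<Longrightarrow> \<omega> \<in> space M \<Longrightarrow> X n \<omega> \<in> {-1, 1}"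
  using model unfolding is_erw_k_def by auto

lemma erw_S_abs_le:
  assumes "\<omega> \<in> space M"
  shows "\<bar>real_of_int (erw_S X n \<omega>)\<bar> \<le> real n"
proof -
  have "\<bar>real_of_int (erw_S X n \<omega>)\<bar> \<le> (\<Sum>j\<in>{1..n}. \<bar>real_of_int (X j \<omega>)\<bar>)"
    unfolding erw_S_def of_int_sum by (rule sum_abs)
  also have "\<dots> \<le> (\<Sum>j\<in>{1..n}. 1)"
    using X_pm1[OF _ assms] by (intro sum_mono) fastforce
  finally show ?thesis
    by simp
qed

definition step_prob :: "nat \<Rightarrow> real" where
  "step_prob c = p * f (real c / real k) + (1 - p) * (1 - f (real c / real k))"

definition up_prob :: "real \<Rightarrow> real" where
  "up_prob y = binomial_average step_prob k 0 y"

(* Since (1 + S_n / n) / 2 is the fraction of +1 steps among the first n, drift (S_n / n) is the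
   conditional mean of X (n+1). *)
definition drift :: "real \<Rightarrow> real" where
  "drift s = 2 * up_prob ((1 + s) / 2) - 1"

lemma step_prob_mem: "c \<le> k \<Longrightarrow> step_prob c \<in> {(1 - \<bar>2 * p - 1\<bar>) / 2 .. (1 + \<bar>2 * p - 1\<bar>) / 2}"
proof -
  assume "c \<le> k"
  then have "real c / real k \<in> {0..1}"
    by (cases "k = 0") auto
  then have "f (real c / real k) \<in> {0..1}"
    using f_range by blast
  then have "\<bar>2 * f (real c / real k) - 1\<bar> \<le> 1"
    by (auto simp: abs_le_iff)
  then have "\<bar>2 * p - 1\<bar> * \<bar>2 * f (real c / real k) - 1\<bar> \<le> \<bar>2 * p - 1\<bar>"
    by (simp add: mult_left_le)
  moreover have "2 * step_prob c - 1 = (2 * p - 1) * (2 * f (real c / real k) - 1)"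
    unfolding step_prob_def by (simp add: algebra_simps)
  ultimately have "\<bar>2 * step_prob c - 1\<bar> \<le> \<bar>2 * p - 1\<bar>"
    by (simp add: abs_mult)
  then show ?thesis
    by (auto simp: abs_le_iff)
qed

lemma up_prob_mem:
  assumes "y \<in> {0..1}"
  shows "up_prob y \<in> {(1 - \<bar>2 * p - 1\<bar>) / 2 .. (1 + \<bar>2 * p - 1\<bar>) / 2}"
  unfolding up_prob_def
  by (rule binomial_average_mem_Icc[of k step_prob 0, OF _ assms]) (simp only: add_0 step_prob_mem)

lemma up_prob_lipschitz:
  assumes "y \<in> {0..1}" "y' \<in> {0..1}"
  shows "\<bar>up_prob y - up_prob y'\<bar> \<le> real k * \<bar>2 * p - 1\<bar> * \<bar>y - y'\<bar>"
proof -
  have "\<bar>up_prob y - up_prob y'\<bar>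
      \<le> real k * ((1 + \<bar>2 * p - 1\<bar>) / 2 - (1 - \<bar>2 * p - 1\<bar>) / 2) * \<bar>y - y'\<bar>"
    unfolding up_prob_def
    by (rule binomial_average_lipschitz[of k step_prob 0, OF _ assms]) (simp only: add_0 step_prob_mem)
  then show ?thesis
    by (simp add: field_simps)
qed

lemma drift_abs_le: "s \<in> {-1..1} \<Longrightarrow> \<bar>drift s\<bar> \<le> \<bar>2 * p - 1\<bar>"
  using up_prob_mem[of "(1 + s) / 2"] unfolding drift_def by (auto simp: abs_le_iff)

lemma drift_lipschitz:
  assumes "s \<in> {-1..1}" "s' \<in> {-1..1}"
  shows "\<bar>drift s - drift s'\<bar> \<le> real k * \<bar>2 * p - 1\<bar> * \<bar>s - s'\<bar>"
proof -
  have "drift s - drift s' = 2 * (up_prob ((1 + s) / 2) - up_prob ((1 + s') / 2))"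
    unfolding drift_def by simp
  then have "\<bar>drift s - drift s'\<bar> = 2 * \<bar>up_prob ((1 + s) / 2) - up_prob ((1 + s') / 2)\<bar>"
    by (simp only: abs_mult)
  also have "\<dots> \<le> 2 * (real k * \<bar>2 * p - 1\<bar> * \<bar>(1 + s) / 2 - (1 + s') / 2\<bar>)"
    using up_prob_lipschitz[of "(1 + s) / 2" "(1 + s') / 2"] assms by simp
  also have "(1 + s) / 2 - (1 + s') / 2 = (s - s') / 2"
    by (simp add: field_simps)
  finally show ?thesis
    by simp
qed

lemma drift_fixed_point_exists:
  assumes "\<bar>2 * p - 1\<bar> < 1" "real k * \<bar>2 * p - 1\<bar> < 1"
  shows "\<exists>x\<in>{-1<..<1}. drift x = x"
proof -
  have "\<exists>!x\<in>{-1..1}. drift x = x"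
  proof (rule Banach_fix[OF compact_imp_complete[OF compact_Icc]])
    show "drift ` {-1..1} \<subseteq> {-1..1}"
    proof
      fix y
      assume "y \<in> drift ` {-1..1}"
      then obtain s where "s \<in> {-1..1}" "y = drift s"
        by blast
      then show "y \<in> {-1..1}"
        using drift_abs_le[of s] assms(1) by (auto simp: abs_le_iff)
    qed
  next
    fix s s' :: real
    assume "s \<in> {-1..1}" "s' \<in> {-1..1}"
    then show "dist (drift s) (drift s') \<le> real k * \<bar>2 * p - 1\<bar> * dist s s'"
      unfolding dist_real_def by (rule drift_lipschitz)
  qed (use assms(2) in simp_all)
  then obtain x where "x \<in> {-1..1}" "drift x = x"
    by blast
  moreover from this have "\<bar>x\<bar> < 1"
    using drift_abs_le assms(1) by fastforce
  ultimately show ?thesis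
    by (auto simp: abs_less_iff)
qed

definition path_event :: "nat \<Rightarrow> (nat \<Rightarrow> int) \<Rightarrow> 'a set" where
  "path_event n x = {\<omega> \<in> space M. \<forall>j\<in>{1..n}. X j \<omega> = x j}"

definition draws_event :: "nat \<Rightarrow> (nat \<Rightarrow> nat) \<Rightarrow> 'a set" where
  "draws_event n u = {\<omega> \<in> space M. \<forall>i\<in>{1..k}. U n i \<omega> = u i}"

lemma path_event_sets [measurable]: "path_event n x \<in> sets M"
  unfolding path_event_def by measurable

lemma draws_event_sets [measurable]: "draws_event n u \<in> sets M"
  unfolding draws_event_def by measurable

lemma path_event_in_erw_events: "path_event n x \<in> erw_events M k X U n m"
  unfolding erw_events_def mem_Collect_eq
  by (rule exI[of _ "{h. \<forall>j\<in>{1..n}. fst h j = x j}"]) (auto simp: path_event_def erw_hist_def)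

lemma space_in_erw_events: "space M \<in> erw_events M k X U n m"
  unfolding erw_events_def by blast

lemma measure_Int_draws_event:
  assumes "n \<ge> 1" "E \<in> erw_events M k X U n (n - 1)" "u \<in> PiE {1..k} (\<lambda>_. {1..n})"
  shows "measure M (E \<inter> draws_event n u) = measure M E / real n ^ k"
proof -
  have "\<forall>n\<ge>1. \<forall>E\<in>erw_events M k X U n (n - 1). \<forall>u. (\<forall>i\<in>{1..k}. u i \<in> {1..n}) \<longrightarrow>
      measure M (E \<inter> draws_event n u) = measure M E / real n ^ k"
    using model unfolding is_erw_k_def draws_event_def by blast
  moreover have "\<forall>i\<in>{1..k}. u i \<in> {1..n}"
    using assms(3) by (simp add: PiE_iff)
  ultimately show ?thesis
    using assms(1,2) by blast
qed

(* The model prescribes the law of the draws only on the cells of {1..n}^k; these cells already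
   carry total mass 1. *)
lemma AE_draws_in_range:
  assumes n: "n \<ge> 1"
  shows "AE \<omega> in M. \<forall>i\<in>{1..k}. U n i \<omega> \<in> {1..n}"
proof -
  let ?P = "PiE {1..k} (\<lambda>_. {1..n})"
  have "disjoint_family_on (draws_event n) ?P"
    unfolding disjoint_family_on_def
  proof (intro ballI impI)
    fix u u'
    assume "u \<in> ?P" "u' \<in> ?P" "u \<noteq> u'"
    then obtain i where "i \<in> {1..k}" "u i \<noteq> u' i"
      by (meson PiE_ext)
    then show "draws_event n u \<inter> draws_event n u' = {}"
      unfolding draws_event_def by auto
  qed
  then have "prob (\<Union>u\<in>?P. draws_event n u) = (\<Sum>u\<in>?P. prob (draws_event n u))"
    by (intro finite_measure_finite_Union) (auto simp: finite_PiE)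
  also have "\<dots> = (\<Sum>u\<in>?P. 1 / real n ^ k)"
    using measure_Int_draws_event[OF n space_in_erw_events] sets.sets_into_space[OF draws_event_sets]
    by (simp add: Int_absorb1 prob_space)
  also have "\<dots> = 1"
    using n by (simp add: card_PiE)
  finally have "AE \<omega> in M. \<omega> \<in> (\<Union>u\<in>?P. draws_event n u)"
    by (rule AE_prob_1)
  then show ?thesis
  proof (rule AE_mp, intro AE_I2 impI)
    fix \<omega>
    assume "\<omega> \<in> (\<Union>u\<in>?P. draws_event n u)"
    then obtain u where "u \<in> ?P" "\<omega> \<in> draws_event n u"
      by blast
    then show "\<forall>i\<in>{1..k}. U n i \<omega> \<in> {1..n}"
      by (auto simp: draws_event_def PiE_iff)
  qed
qed

lemma erw_Cplus_measurable: "erw_Cplus k X U n \<in> measurable M (count_space UNIV)"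
proof -
  have eq: "erw_Cplus k X U n \<omega> = (\<Sum>i\<in>{1..k}. if X (U n i \<omega>) \<omega> = 1 then 1 else 0)" for \<omega>
    unfolding erw_Cplus_def by (simp flip: sum.inter_filter)
  have "(\<lambda>\<omega>. X (U n i \<omega>) \<omega>) \<in> measurable M (count_space UNIV)" for i
    by (rule measurable_compose_countable[OF X_measurable U_measurable])
  then show ?thesis
    unfolding eq[abs_def] by measurable
qed

lemma AE_step_prob_Cplus_eq_sum_draws:
  fixes x :: "nat \<Rightarrow> int"
  assumes n: "n \<ge> 1"
  defines "W \<equiv> {j \<in> {1..n}. x j = 1}"
  shows "AE \<omega> in M. indicator (path_event n x) \<omega> * step_prob (erw_Cplus k X U n \<omega>)
    = (\<Sum>u\<in>PiE {1..k} (\<lambda>_. {1..n}).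
         indicator (path_event n x \<inter> draws_event n u) \<omega> * step_prob (card {i \<in> {1..k}. u i \<in> W}))"
  using AE_draws_in_range[OF n]
proof (rule AE_mp, intro AE_I2 impI)
  fix \<omega>
  assume \<omega>: "\<omega> \<in> space M" and range: "\<forall>i\<in>{1..k}. U n i \<omega> \<in> {1..n}"
  let ?u = "restrict (\<lambda>i. U n i \<omega>) {1..k}"
  let ?g = "\<lambda>u. step_prob (card {i \<in> {1..k}. u i \<in> W})"
  have "indicator (path_event n x \<inter> draws_event n u) \<omega> * ?g u
      = indicator (path_event n x) \<omega> * (if \<forall>i\<in>{1..k}. U n i \<omega> = u i then ?g u else 0)" for u
    using \<omega> by (simp add: indicator_def draws_event_def)
  then have "(\<Sum>u\<in>PiE {1..k} (\<lambda>_. {1..n}). indicator (path_event n x \<inter> draws_event n u) \<omega> * ?g u)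
      = indicator (path_event n x) \<omega> * (\<Sum>u\<in>PiE {1..k} (\<lambda>_. {1..n}).
          if \<forall>i\<in>{1..k}. U n i \<omega> = u i then ?g u else 0)"
    by (simp only: sum_distrib_left)
  also have "\<dots> = indicator (path_event n x) \<omega> * ?g ?u"
    using sum_PiE_if_eq_restrict[of "{1..k}" "\<lambda>_. {1..n}" "\<lambda>i. U n i \<omega>" ?g] range by simp
  also have "\<dots> = indicator (path_event n x) \<omega> * step_prob (erw_Cplus k X U n \<omega>)"
  proof (cases "\<omega> \<in> path_event n x")
    case True
    then have "{i \<in> {1..k}. ?u i \<in> W} = {i \<in> {1..k}. X (U n i \<omega>) \<omega> = 1}"
      using range unfolding W_def path_event_def by auto
    then show ?thesis
      using True unfolding erw_Cplus_def by simp
  next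
    case False
    then have zero: "indicator (path_event n x) \<omega> = (0 :: real)"
      by simp
    show ?thesis
      by (simp only: zero mult_zero_left)
  qed
  finally show "indicator (path_event n x) \<omega> * step_prob (erw_Cplus k X U n \<omega>)
    = (\<Sum>u\<in>PiE {1..k} (\<lambda>_. {1..n}). indicator (path_event n x \<inter> draws_event n u) \<omega> * ?g u)"
    by simp
qed

lemma prob_up_step_given_path:
  assumes n: "n \<ge> 1"
  shows "prob (path_event n x \<inter> {\<omega> \<in> space M. X (Suc n) \<omega> = 1})
    = prob (path_event n x) * up_prob (card {j \<in> {1..n}. x j = 1} / n)"
proof -
  define W where "W = {j \<in> {1..n}. x j = 1}"
  let ?E = "path_event n x" and ?P = "PiE {1..k} (\<lambda>_. {1..n})"
  let ?g = "\<lambda>u. step_prob (card {i \<in> {1..k}. u i \<in> W})"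
  have [measurable]: "(\<lambda>\<omega>. step_prob (erw_Cplus k X U n \<omega>)) \<in> borel_measurable M"
    by (rule measurable_compose[OF erw_Cplus_measurable borel_measurable_count_space])
  have "prob (?E \<inter> {\<omega> \<in> space M. X (Suc n) \<omega> = 1})
      = (\<integral>\<omega>. indicator ?E \<omega> * step_prob (erw_Cplus k X U n \<omega>) \<partial>M)"
    using model n path_event_in_erw_events
    unfolding is_erw_k_def set_lebesgue_integral_def step_prob_def by simp
  also have "\<dots> = (\<integral>\<omega>. (\<Sum>u\<in>?P. indicator (?E \<inter> draws_event n u) \<omega> * ?g u) \<partial>M)"
    using AE_step_prob_Cplus_eq_sum_draws[OF n, of x] unfolding W_def
    by (intro integral_cong_AE) auto
  also have "\<dots> = (\<Sum>u\<in>?P. (\<integral>\<omega>. indicator (?E \<inter> draws_event n u) \<omega> * ?g u \<partial>M))"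
    by (rule Bochner_Integration.integral_sum) (auto simp: emeasure_eq_measure)
  also have "\<dots> = (\<Sum>u\<in>?P. prob (?E \<inter> draws_event n u) * ?g u)"
    by (simp add: Int_absorb2 sets.sets_into_space)
  also have "\<dots> = prob ?E / real n ^ k * (\<Sum>u\<in>?P. step_prob (0 + card {i \<in> {1..k}. u i \<in> W}))"
    using measure_Int_draws_event[OF n path_event_in_erw_events] by (simp add: sum_distrib_left)
  also have "(\<Sum>u\<in>?P. step_prob (0 + card {i \<in> {1..k}. u i \<in> W})) = real n ^ k * up_prob (card W / n)"
  proof -
    have "W \<subseteq> {1..n}"
      unfolding W_def by auto
    from sum_PiE_card_eq_binomial_average[OF _ _ _ this, of "{1..k}" step_prob 0] n
    show ?thesis
      unfolding up_prob_def by simp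
  qed
  also have "prob ?E / real n ^ k * (real n ^ k * up_prob (card W / n)) = prob ?E * up_prob (card W / n)"
    using n by simp
  finally show ?thesis
    unfolding W_def .
qed

definition path_prefix :: "nat \<Rightarrow> 'a \<Rightarrow> nat \<Rightarrow> int" where
  "path_prefix n \<omega> = restrict (\<lambda>j. X j \<omega>) {1..n}"

abbreviation sign_paths :: "nat \<Rightarrow> (nat \<Rightarrow> int) set" where
  "sign_paths n \<equiv> PiE {1..n} (\<lambda>_. {-1, 1})"

lemma path_function_eq_sum:
  fixes h :: "(nat \<Rightarrow> int) \<Rightarrow> real"
  assumes "\<omega> \<in> space M"
  shows "h (path_prefix n \<omega>) = (\<Sum>x\<in>sign_paths n. indicator (path_event n x) \<omega> * h x)"
proof -
  have "(\<Sum>x\<in>sign_paths n. indicator (path_event n x) \<omega> * h x)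
      = (\<Sum>x\<in>sign_paths n. if \<forall>j\<in>{1..n}. X j \<omega> = x j then h x else 0)"
    using assms by (intro sum.cong refl) (simp add: path_event_def)
  also have "\<dots> = h (path_prefix n \<omega>)"
    unfolding path_prefix_def using X_pm1[OF _ assms] by (intro sum_PiE_if_eq_restrict) auto
  finally show ?thesis ..
qed

lemma path_function_measurable [measurable]:
  fixes h :: "(nat \<Rightarrow> int) \<Rightarrow> real"
  shows "(\<lambda>\<omega>. h (path_prefix n \<omega>)) \<in> borel_measurable M"
proof -
  have "(\<lambda>\<omega>. \<Sum>x\<in>sign_paths n. indicator (path_event n x) \<omega> * h x) \<in> borel_measurable M"
    by measurable
  then show ?thesis
    by (rule measurable_cong[THEN iffD1, rotated]) (simp add: path_function_eq_sum)
qed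

lemma erw_S_path_prefix: "j \<le> n \<Longrightarrow> erw_S X j \<omega> = (\<Sum>i\<in>{1..j}. path_prefix n \<omega> i)"
  unfolding erw_S_def path_prefix_def by simp

lemma integral_path_event_increment:
  fixes d :: real
  assumes n: "n \<ge> 1" and x: "x \<in> sign_paths n"
  defines "d \<equiv> drift (real_of_int (sum x {1..n}) / n)"
  shows "(\<integral>\<omega>. indicator (path_event n x) \<omega> * (real_of_int (X (Suc n) \<omega>) - d) \<partial>M) = 0"
proof -
  let ?E = "path_event n x"
  let ?A = "?E \<inter> {\<omega> \<in> space M. X (Suc n) \<omega> = 1}"
  have d: "d = 2 * up_prob (card {j \<in> {1..n}. x j = 1} / n) - 1"
  proof -
    have "real_of_int (sum x {1..n}) = 2 * real (card {j \<in> {1..n}. x j = 1}) - real n"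
      using x sum_sign_eq_card[of "{1..n}" x] by (auto simp: PiE_iff)
    then have "(1 + real_of_int (sum x {1..n}) / n) / 2 = card {j \<in> {1..n}. x j = 1} / n"
      using n by (simp add: field_simps)
    then show ?thesis
      unfolding d_def drift_def by simp
  qed
  have "(\<integral>\<omega>. indicator ?E \<omega> * (X (Suc n) \<omega> - d) \<partial>M)
      = (\<integral>\<omega>. 2 * indicator ?A \<omega> - (1 + d) * indicator ?E \<omega> \<partial>M)"
  proof (rule Bochner_Integration.integral_cong [OF refl])
    fix \<omega>
    assume "\<omega> \<in> space M"
    then show "indicator ?E \<omega> * (X (Suc n) \<omega> - d) = 2 * indicator ?A \<omega> - (1 + d) * indicator ?E \<omega>"
      using X_pm1[of "Suc n" \<omega>] by (auto simp: indicator_def)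
  qed
  also have "\<dots> = 2 * prob ?A - (1 + d) * prob ?E"
    by (subst Bochner_Integration.integral_diff) (auto simp: emeasure_eq_measure Int_absorb2 sets.sets_into_space)
  also have "\<dots> = 0"
    unfolding prob_up_step_given_path[OF n] d by (simp add: algebra_simps)
  finally show ?thesis .
qed

lemma integral_path_function_times_increment:
  assumes n: "n \<ge> 1"
  shows "(\<integral>\<omega>. h (path_prefix n \<omega>) * (X (Suc n) \<omega> - drift (real_of_int (erw_S X n \<omega>) / real n)) \<partial>M) = 0"
proof -
  let ?d = "\<lambda>x. drift (real_of_int (sum x {1..n}) / n)"
  have "(\<integral>\<omega>. h (path_prefix n \<omega>) * (X (Suc n) \<omega> - drift (real_of_int (erw_S X n \<omega>) / real n)) \<partial>M)
      = (\<integral>\<omega>. (\<Sum>x\<in>sign_paths n. h x * (indicator (path_event n x) \<omega> * (X (Suc n) \<omega> - ?d x))) \<partial>M)"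
  proof (rule Bochner_Integration.integral_cong [OF refl])
    fix \<omega>
    assume \<omega>: "\<omega> \<in> space M"
    show "h (path_prefix n \<omega>) * (X (Suc n) \<omega> - drift (real_of_int (erw_S X n \<omega>) / real n))
      = (\<Sum>x\<in>sign_paths n. h x * (indicator (path_event n x) \<omega> * (X (Suc n) \<omega> - ?d x)))"
      using path_function_eq_sum[OF \<omega>, of "\<lambda>x. h x * (X (Suc n) \<omega> - ?d x)" n]
      by (simp add: erw_S_path_prefix[OF order_refl] mult_ac del: of_int_sum)
  qed
  also have "\<dots> = (\<Sum>x\<in>sign_paths n. h x * (\<integral>\<omega>. indicator (path_event n x) \<omega> * (X (Suc n) \<omega> - ?d x) \<partial>M))"
  proof (subst Bochner_Integration.integral_sum)
    fix x
    show "integrable M (\<lambda>\<omega>. h x * (indicator (path_event n x) \<omega> * (X (Suc n) \<omega> - ?d x)))"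
    proof (intro integrable_mult_right integrable_const_bound[where B = "1 + \<bar>?d x\<bar>"] AE_I2)
      fix \<omega>
      assume "\<omega> \<in> space M"
      then have "X (Suc n) \<omega> \<in> {-1, 1}"
        by (intro X_pm1) simp
      then show "norm (indicator (path_event n x) \<omega> * (X (Suc n) \<omega> - ?d x)) \<le> 1 + \<bar>?d x\<bar>"
        by (auto simp: indicator_def)
    qed measurable
  qed simp
  also have "\<dots> = 0"
    using integral_path_event_increment[OF n] by simp
  finally show ?thesis .
qed

(* increment 0 = X 1 - drift 0 is not centred (X 1 has law q); this is harmless, since it is only
   ever tested against powers of the empty partial sum before it. *)
definition increment :: "nat \<Rightarrow> 'a \<Rightarrow> real" where
  "increment j \<omega> = X (Suc j) \<omega> - drift (real_of_int (erw_S X j \<omega>) / real j)"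

lemma increment_eq_path_function:
  assumes "j < n"
  shows "increment j \<omega>
    = path_prefix n \<omega> (Suc j) - drift (real_of_int (\<Sum>i\<in>{1..j}. path_prefix n \<omega> i) / real j)"
proof -
  have "erw_S X j \<omega> = (\<Sum>i\<in>{1..j}. path_prefix n \<omega> i)" "path_prefix n \<omega> (Suc j) = X (Suc j) \<omega>"
    using assms by (simp_all add: erw_S_path_prefix[of j n] path_prefix_def)
  then show ?thesis
    unfolding increment_def by (simp only:)
qed

lemma increment_measurable [measurable]: "increment j \<in> borel_measurable M"
proof -
  have eq: "increment j = (\<lambda>\<omega>. (\<lambda>x. x (Suc j) - drift (real_of_int (\<Sum>i\<in>{1..j}. x i) / real j))
      (path_prefix (Suc j) \<omega>))"
    by (rule ext) (rule increment_eq_path_function, simp)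
  show ?thesis
    unfolding eq by (rule path_function_measurable)
qed

lemma erw_S_div_mem: "\<omega> \<in> space M \<Longrightarrow> real_of_int (erw_S X n \<omega>) / real n \<in> {-1..1}"
  using erw_S_abs_le[of \<omega> n] by (cases "n = 0") (auto simp: abs_le_iff field_simps)

lemma increment_abs_le: "\<omega> \<in> space M \<Longrightarrow> \<bar>increment j \<omega>\<bar> \<le> 1 + \<bar>2 * p - 1\<bar>"
  using X_pm1[of "Suc j" \<omega>] drift_abs_le[OF erw_S_div_mem, of \<omega> j]
  unfolding increment_def by auto

lemma increments_orthogonal:
  assumes "m \<in> {1, 3}"
  shows "(\<integral>\<omega>. (\<Sum>j<n. increment j \<omega>) ^ m * increment n \<omega> \<partial>M) = 0"
proof (cases "n = 0")
  case True
  then show ?thesis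
    using assms by auto
next
  case False
  let ?h = "\<lambda>x. (\<Sum>j<n. x (Suc j) - drift (real_of_int (\<Sum>i\<in>{1..j}. x i) / real j)) ^ m"
  have "(\<Sum>j<n. increment j \<omega>) ^ m = ?h (path_prefix n \<omega>)" for \<omega>
    by (simp add: increment_eq_path_function[of _ n])
  then show ?thesis
    using integral_path_function_times_increment[of n ?h] False by (simp add: increment_def)
qed

lemma AE_tendsto_fixed_point:
  assumes L: "real k * \<bar>2 * p - 1\<bar> < 1" and x: "x \<in> {-1..1}" "drift x = x"
  shows "AE \<omega> in M. (\<lambda>n. real_of_int (erw_S X n \<omega>) / real n) \<longlonglongrightarrow> x"
proof -
  have "AE \<omega> in M. (\<lambda>n. (\<Sum>j<n. increment j \<omega>) / real n) \<longlonglongrightarrow> 0"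
    by (rule AE_partial_sums_div_tendsto_zero[OF increment_measurable increment_abs_le increments_orthogonal])
  then show ?thesis
  proof (rule AE_mp, intro AE_I2 impI)
    fix \<omega>
    assume \<omega>: "\<omega> \<in> space M" and T: "(\<lambda>n. (\<Sum>j<n. increment j \<omega>) / real n) \<longlonglongrightarrow> 0"
    let ?a = "\<lambda>n. real_of_int (erw_S X n \<omega>) / real n"
    have "(\<lambda>n. ?a n - x) \<longlonglongrightarrow> 0"
    proof (rule tendsto_zero_of_contracting_averages[OF _ L _ _ _ T])
      show "\<bar>drift (?a j) - x\<bar> \<le> real k * \<bar>2 * p - 1\<bar> * \<bar>?a j - x\<bar>" for j
        using drift_lipschitz[OF erw_S_div_mem[OF \<omega>] x(1)] x(2) by simp
      show "real n * (?a n - x) = (\<Sum>j<n. drift (?a j) - x) + (\<Sum>j<n. increment j \<omega>)" for n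
      proof -
        have "real n * ?a n = (\<Sum>j<n. real_of_int (X (Suc j) \<omega>))"
          by (cases "n = 0") (simp_all add: erw_S_def sum.atLeast1_atMost_eq)
        then show ?thesis
          by (simp add: increment_def sum_subtractf algebra_simps)
      qed
      show "\<bar>?a n - x\<bar> \<le> 2" for n
        using erw_S_div_mem[OF \<omega>, of n] x(1) by auto
    qed simp
    then show "?a \<longlonglongrightarrow> x"
      by (simp add: LIM_zero_iff)
  qed
qed

end

theorem proposition4p4:
  fixes M :: "'a measure" and q p :: real and k :: nat and f :: "real \<Rightarrow> real"
    and X :: "nat \<Rightarrow> 'a \<Rightarrow> int" and U :: "nat \<Rightarrow> nat \<Rightarrow> 'a \<Rightarrow> nat"
  assumes "0 \<le> q" "q \<le> 1"
    and "0 < p" "p < 1" "p \<noteq> 1/2"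
    and "k \<ge> 1"
    and "\<forall>x\<in>{0..1}. f x \<in> {0..1}"
    and "is_erw_k M q p k f X U"
    and "(1/2 < p \<and> p < 1/2 + 1/(2 * real k) \<and> f 1 < p / (2*p - 1))
       \<or> (1/2 - 1/(2 * real k) < p \<and> p < 1/2 \<and> f 0 < (1 - p) / (1 - 2*p))"
  shows "\<exists>x\<in>{-1<..<1}. AE \<omega> in M.
           (\<lambda>n. real_of_int (erw_S X n \<omega>) / real n) \<longlonglongrightarrow> x"
proof -
  interpret erw M q p k f X U
    using assms(7,8) by unfold_locales
  have p: "\<bar>2 * p - 1\<bar> < 1"
    using assms(3,4) by auto
  have L: "real k * \<bar>2 * p - 1\<bar> < 1"
    using assms(9)
  proof
    assume "1/2 < p \<and> p < 1/2 + 1/(2 * real k) \<and> f 1 < p / (2*p - 1)"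
    then show ?thesis
      using assms(6) by (simp add: field_simps)
  next
    assume "1/2 - 1/(2 * real k) < p \<and> p < 1/2 \<and> f 0 < (1 - p) / (1 - 2*p)"
    then show ?thesis
      using assms(6) by (simp add: field_simps)
  qed
  obtain x where "x \<in> {-1<..<1}" "drift x = x"
    using drift_fixed_point_exists[OF p L] by blast
  then show ?thesis
    using AE_tendsto_fixed_point[OF L, of x] by auto
qed

end
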